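(* For every integer $N\ge 0$, let $T_{1\times 3}(6,N)$ be the number of tilings of a $6\times n$ rectangle, $n=N/2$, by $N$ tiles of size $1\times 3$ (and $0$ if $N$ is odd). Then, as formal power series, \[ \sum_{N\ge 0} T_{1\times 3}(6,N)\,z^N=\frac{(1-z^6)^2(1-z^4-z^6)}{1-z^2-z^4-7z^6+z^8+5z^{10}+10z^{12}+z^{14}-3z^{16}-5z^{18}-z^{20}+z^{22}+z^{24}}. \]
   Context: A tiling of an $m\times n$ rectangle (width $m$, length $n$, made of $mn$ unit squares) by $a\times b$ tiles is a partition of the rectangle into non-overlapping axis-parallel $a\times b$ rectangles with integer corner coordinates, each placed in either of its two orientations. Tilings related by reflections or rotations of the rectangle are counted as distinct. The empty tiling counts once for $N=0$. *)

theory Defs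
  imports "HOL-Computational_Algebra.Computational_Algebra"
begin

text \<open>Unit squares are identified with their lower-left corners (x, y) in nat x nat.
  The m x n rectangle (width m, length n) is the set of cells {0..<m} x {0..<n}.\<close>

definition rect_cells :: "nat \<Rightarrow> nat \<Rightarrow> nat \<Rightarrow> nat \<Rightarrow> (nat \<times> nat) set" where
  "rect_cells x y w h = {x..<x+w} \<times> {y..<y+h}"

definition rectangle :: "nat \<Rightarrow> nat \<Rightarrow> (nat \<times> nat) set" where
  "rectangle m n = {0..<m} \<times> {0..<n}"

definition is_tile :: "nat \<Rightarrow> nat \<Rightarrow> (nat \<times> nat) set \<Rightarrow> bool" where
  "is_tile a b t \<longleftrightarrow> (\<exists>x y. t = rect_cells x y a b \<or> t = rect_cells x y b a)"

definition is_tiling :: "nat \<Rightarrow> nat \<Rightarrow> nat \<Rightarrow> nat \<Rightarrow> (nat \<times> nat) set set \<Rightarrow> bool" where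
  "is_tiling a b m n P \<longleftrightarrow>
     finite P \<and> (\<forall>t\<in>P. is_tile a b t) \<and>
     (\<forall>t\<in>P. \<forall>s\<in>P. t \<noteq> s \<longrightarrow> t \<inter> s = {}) \<and>
     \<Union>P = rectangle m n"

definition T_count :: "nat \<Rightarrow> nat \<Rightarrow> nat \<Rightarrow> nat \<Rightarrow> nat" where
  "T_count a b m N =
     (if even N then card {P. is_tiling a b m (N div 2) P \<and> card P = N} else 0)"

end

theory Submission
  imports Defs
begin

text \<open>Tile the 6 \<times> n rectangle from the bottom, always covering the lowest, leftmost free
  cell; the free region is then a skyline, determined by the column heights. Once the bottom
  row is full, lowering everything by one leaves one of 21 profiles of relative heights, so
  the counts obey a linear transfer on 21 states. The orbit of the first unit row under the
  transfer matrix satisfies a linear relation of order 12, whose coefficients are those of the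
  reversed denominator; hence the number of tilings of the 6 \<times> n rectangle satisfies the
  recurrence with characteristic polynomial the denominator in w = z^2, and 14 initial
  values determine the numerator. Substituting w = z^2 gives the theorem.\<close>

section \<open>Tilings of arbitrary regions\<close>

definition tilings :: "nat \<Rightarrow> nat \<Rightarrow> (nat \<times> nat) set \<Rightarrow> (nat \<times> nat) set set set" where
  "tilings a b \<Omega> = {P. finite P \<and> (\<forall>t\<in>P. is_tile a b t) \<and> pairwise disjnt P \<and> \<Union>P = \<Omega>}"

lemma is_tiling_iff_tilings: "is_tiling a b m n P \<longleftrightarrow> P \<in> tilings a b (rectangle m n)"
  unfolding is_tiling_def tilings_def pairwise_def disjnt_def by simp

lemma finite_tilings: "finite \<Omega> \<Longrightarrow> finite (tilings a b \<Omega>)"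
  by (rule finite_subset[of _ "Pow (Pow \<Omega>)"]) (auto simp: tilings_def)

lemma card_tile: "is_tile a b t \<Longrightarrow> card t = a * b"
  by (auto simp: is_tile_def rect_cells_def card_cartesian_product)

lemma finite_tile: "is_tile a b t \<Longrightarrow> finite t"
  by (auto simp: is_tile_def rect_cells_def)

lemma tile_nonempty: "is_tile a b t \<Longrightarrow> 0 < a \<Longrightarrow> 0 < b \<Longrightarrow> t \<noteq> {}"
  using card_tile by fastforce

lemma tilings_empty: "0 < a \<Longrightarrow> 0 < b \<Longrightarrow> tilings a b {} = {{}}"
  by (auto simp: tilings_def dest: tile_nonempty)

lemma card_tiling:
  assumes "P \<in> tilings a b \<Omega>"
  shows "card \<Omega> = a * b * card P"
proof -
  have P: "finite P" "\<And>t. t \<in> P \<Longrightarrow> is_tile a b t" "pairwise disjnt P" "\<Union>P = \<Omega>"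
    using assms by (auto simp: tilings_def)
  have "card (\<Union>P) = (\<Sum>t\<in>P. card t)"
    using P(2,3) finite_tile by (intro card_Union_disjoint) auto
  also have "\<dots> = (\<Sum>t\<in>P. a * b)"
    using P(2) by (intro sum.cong) (auto simp: card_tile)
  finally show ?thesis using P(4) by simp
qed

lemma tilings_remove:
  assumes "P \<in> tilings a b \<Omega>" "\<tau> \<in> P"
  shows "P - {\<tau>} \<in> tilings a b (\<Omega> - \<tau>)"
proof -
  have P: "finite P" "\<forall>t\<in>P. is_tile a b t" "pairwise disjnt P" "\<Union>P = \<Omega>"
    using assms(1) unfolding tilings_def by auto
  have "\<Union>(P - {\<tau>}) = \<Omega> - \<tau>"
    using P(3,4) assms(2) unfolding pairwise_def disjnt_def by blast
  with P show ?thesis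
    unfolding tilings_def by (auto intro: pairwise_subset)
qed

lemma tilings_insert:
  assumes "P \<in> tilings a b (\<Omega> - \<tau>)" "is_tile a b \<tau>" "\<tau> \<subseteq> \<Omega>"
  shows "insert \<tau> P \<in> tilings a b \<Omega>"
proof -
  have P: "finite P" "\<forall>t\<in>P. is_tile a b t" "pairwise disjnt P" "\<Union>P = \<Omega> - \<tau>"
    using assms(1) unfolding tilings_def by auto
  then have "disjnt t \<tau>" if "t \<in> P" for t
    using that unfolding disjnt_def by blast
  then have "pairwise disjnt (insert \<tau> P)"
    using P(3) by (simp add: pairwise_insert) (meson disjnt_sym)
  moreover have "\<Union>(insert \<tau> P) = \<Omega>"
    using P(4) assms(3) by blast
  ultimately show ?thesis
    using P(1,2) assms(2) unfolding tilings_def by (intro CollectI conjI) auto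
qed

lemma tilings_containing:
  assumes "is_tile a b \<tau>" "\<tau> \<noteq> {}"
  shows "{P \<in> tilings a b \<Omega>. \<tau> \<in> P} =
           (if \<tau> \<subseteq> \<Omega> then insert \<tau> ` tilings a b (\<Omega> - \<tau>) else {})"
proof (cases "\<tau> \<subseteq> \<Omega>")
  case True
  have "{P \<in> tilings a b \<Omega>. \<tau> \<in> P} = insert \<tau> ` tilings a b (\<Omega> - \<tau>)"
  proof (intro equalityI subsetI)
    fix P assume "P \<in> {P \<in> tilings a b \<Omega>. \<tau> \<in> P}"
    then have "P - {\<tau>} \<in> tilings a b (\<Omega> - \<tau>)" "P = insert \<tau> (P - {\<tau>})"
      using tilings_remove by auto
    then show "P \<in> insert \<tau> ` tilings a b (\<Omega> - \<tau>)"
      by (metis image_eqI)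
  next
    fix P assume "P \<in> insert \<tau> ` tilings a b (\<Omega> - \<tau>)"
    then show "P \<in> {P \<in> tilings a b \<Omega>. \<tau> \<in> P}"
      using tilings_insert[OF _ assms(1) True] by blast
  qed
  with True show ?thesis
    by simp
next
  case False
  then have "{P \<in> tilings a b \<Omega>. \<tau> \<in> P} = {}"
    unfolding tilings_def by blast
  with False show ?thesis
    by simp
qed

lemma card_tilings_containing:
  assumes "is_tile a b \<tau>" "\<tau> \<noteq> {}"
  shows "card {P \<in> tilings a b \<Omega>. \<tau> \<in> P} =
           (if \<tau> \<subseteq> \<Omega> then card (tilings a b (\<Omega> - \<tau>)) else 0)"
proof -
  have "\<tau> \<notin> P" if "P \<in> tilings a b (\<Omega> - \<tau>)" for P
    using that assms(2) unfolding tilings_def by blast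
  then have "inj_on (insert \<tau>) (tilings a b (\<Omega> - \<tau>))"
    by (meson inj_onI insert_ident)
  then show ?thesis
    using tilings_containing[OF assms] by (simp add: card_image)
qed

lemma tile_at_lowest_cell:
  assumes "is_tile a b t" "t \<subseteq> \<Omega>" "(x, y) \<in> t"
    and lowest: "\<And>x' y'. (x', y') \<in> \<Omega> \<Longrightarrow> y < y' \<or> (y = y' \<and> x \<le> x')"
  shows "t = rect_cells x y a b \<or> t = rect_cells x y b a"
proof -
  obtain x' y' where t: "t = rect_cells x' y' a b \<or> t = rect_cells x' y' b a"
    using assms(1) unfolding is_tile_def by blast
  then have "(x', y') \<in> t" "x' \<le> x" "y' \<le> y"
    using assms(3) unfolding rect_cells_def by auto
  with assms(2) lowest have "x' = x" "y' = y"
    by force+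
  with t show ?thesis
    by blast
qed

lemma card_tilings_lowest_cell:
  assumes "(x, y) \<in> \<Omega>"
    and lowest: "\<And>x' y'. (x', y') \<in> \<Omega> \<Longrightarrow> y < y' \<or> (y = y' \<and> x \<le> x')"
    and "finite \<Omega>" "0 < a" "0 < b" "a \<noteq> b"
  defines "H \<equiv> rect_cells x y a b" and "V \<equiv> rect_cells x y b a"
  shows "card (tilings a b \<Omega>) =
           (if H \<subseteq> \<Omega> then card (tilings a b (\<Omega> - H)) else 0)
         + (if V \<subseteq> \<Omega> then card (tilings a b (\<Omega> - V)) else 0)"
proof -
  have tiles: "is_tile a b H" "is_tile a b V"
    unfolding H_def V_def is_tile_def by blast+
  have nonempty: "H \<noteq> {}" "V \<noteq> {}"
    using tiles assms(4,5) by (auto dest: tile_nonempty)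
  have "(x, y) \<in> H" "(x, y) \<in> V"
    using assms(4,5) unfolding H_def V_def rect_cells_def by auto
  moreover have "H \<noteq> V"
  proof
    assume "H = V"
    then have "(x, y + a) \<in> H \<longleftrightarrow> (x, y + a) \<in> V" "(x + b, y) \<in> H \<longleftrightarrow> (x + b, y) \<in> V"
      by simp_all
    then show False
      using assms(4-6) unfolding H_def V_def rect_cells_def by auto
  qed
  ultimately have disjoint: "{P \<in> tilings a b \<Omega>. H \<in> P} \<inter> {P \<in> tilings a b \<Omega>. V \<in> P} = {}"
    unfolding tilings_def pairwise_def disjnt_def by blast
  have "P \<in> {P \<in> tilings a b \<Omega>. H \<in> P} \<union> {P \<in> tilings a b \<Omega>. V \<in> P}"
    if P: "P \<in> tilings a b \<Omega>" for P
  proof -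
    obtain t where "t \<in> P" "(x, y) \<in> t"
      using P assms(1) unfolding tilings_def by blast
    moreover have "is_tile a b t" "t \<subseteq> \<Omega>"
      using P \<open>t \<in> P\<close> unfolding tilings_def by blast+
    ultimately show ?thesis
      using P tile_at_lowest_cell[OF _ _ _ lowest] unfolding H_def V_def by blast
  qed
  then have "tilings a b \<Omega> = {P \<in> tilings a b \<Omega>. H \<in> P} \<union> {P \<in> tilings a b \<Omega>. V \<in> P}"
    by blast
  then have "card (tilings a b \<Omega>) =
      card {P \<in> tilings a b \<Omega>. H \<in> P} + card {P \<in> tilings a b \<Omega>. V \<in> P}"
    using finite_tilings[OF assms(3)] disjoint by (metis (no_types, lifting) card_Un_disjoint finite_Un)
  then show ?thesis
    using card_tilings_containing tiles nonempty by simp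
qed

section \<open>Skylines\<close>

text \<open>The part of an n-high strip still to be tiled when column x is covered up to height h ! x.\<close>

definition skyline :: "nat list \<Rightarrow> nat \<Rightarrow> (nat \<times> nat) set" where
  "skyline h n = {(x, y). x < length h \<and> h ! x \<le> y \<and> y < n}"

lemma finite_skyline: "finite (skyline h n)"
  by (rule finite_subset[of _ "{..<length h} \<times> {..<n}"]) (auto simp: skyline_def)

lemma min_list_le:
  fixes h :: "'a::linorder list"
  assumes "c \<in> set h"
  shows "min_list h \<le> c"
proof -
  have "min_list h = Min (set h)"
    using assms by (intro min_list_Min) auto
  also have "\<dots> \<le> c"
    using assms by simp
  finally show ?thesis .
qed

lemma length_takeWhile_neq_less: "c \<in> set h \<Longrightarrow> length (takeWhile (\<lambda>x. x \<noteq> c) h) < length h"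
  by (induction h) auto

definition lowest_column :: "nat list \<Rightarrow> nat" where
  "lowest_column h = length (takeWhile (\<lambda>c. c \<noteq> min_list h) h)"

lemma lowest_column:
  assumes "h \<noteq> []"
  shows "lowest_column h < length h" "h ! lowest_column h = min_list h"
    and "i < lowest_column h \<Longrightarrow> h ! i \<noteq> min_list h"
proof -
  have "min_list h \<in> set h"
    using assms by (simp add: min_list_Min)
  then show less: "lowest_column h < length h"
    unfolding lowest_column_def by (rule length_takeWhile_neq_less)
  then show "h ! lowest_column h = min_list h"
    unfolding lowest_column_def using nth_length_takeWhile by fastforce
  assume "i < lowest_column h"
  then have "takeWhile (\<lambda>c. c \<noteq> min_list h) h ! i \<in> set (takeWhile (\<lambda>c. c \<noteq> min_list h) h)"
    unfolding lowest_column_def by (rule nth_mem)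
  with \<open>i < lowest_column h\<close> show "h ! i \<noteq> min_list h"
    unfolding lowest_column_def by (auto simp: takeWhile_nth dest: set_takeWhileD)
qed

lemma lowest_cell_skyline:
  assumes "h \<noteq> []" "min_list h < n"
  shows "(lowest_column h, min_list h) \<in> skyline h n"
    and "(x', y') \<in> skyline h n \<Longrightarrow>
           min_list h < y' \<or> (min_list h = y' \<and> lowest_column h \<le> x')"
proof -
  show "(lowest_column h, min_list h) \<in> skyline h n"
    using lowest_column[OF assms(1)] assms(2) by (simp add: skyline_def)
  assume "(x', y') \<in> skyline h n"
  then have "x' < length h" "h ! x' \<le> y'"
    by (auto simp: skyline_def)
  moreover have "min_list h \<le> h ! x'"
    using \<open>x' < length h\<close> by (simp add: min_list_le)
  ultimately show "min_list h < y' \<or> (min_list h = y' \<and> lowest_column h \<le> x')"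
    using lowest_column(3)[OF assms(1), of x'] by linarith
qed

lemma skyline_eq_empty_iff: "skyline h n = {} \<longleftrightarrow> h = [] \<or> n \<le> min_list h"
proof
  assume "skyline h n = {}"
  then show "h = [] \<or> n \<le> min_list h"
    using lowest_cell_skyline(1) by (metis empty_iff not_le)
next
  assume empty: "h = [] \<or> n \<le> min_list h"
  show "skyline h n = {}"
  proof (rule equals0I)
    fix c assume "c \<in> skyline h n"
    then obtain x y where "x < length h" "h ! x \<le> y" "y < n"
      by (auto simp: skyline_def)
    with empty show False
      using min_list_le[OF nth_mem, of x h] by auto
  qed
qed

lemma horizontal_tile_subset_skyline:
  assumes "x < length h" "h ! x = y" "y < n" "\<And>i. i < length h \<Longrightarrow> y \<le> h ! i"
  shows "rect_cells x y 3 1 \<subseteq> skyline h n \<longleftrightarrow>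
           x + 2 < length h \<and> h ! (x + 1) = y \<and> h ! (x + 2) = y"
proof
  assume "rect_cells x y 3 1 \<subseteq> skyline h n"
  then have "(x + 1, y) \<in> skyline h n" "(x + 2, y) \<in> skyline h n"
    by (auto simp: rect_cells_def)
  then show "x + 2 < length h \<and> h ! (x + 1) = y \<and> h ! (x + 2) = y"
    using assms(4)[of "x + 1"] assms(4)[of "x + 2"] by (auto simp: skyline_def)
next
  assume row: "x + 2 < length h \<and> h ! (x + 1) = y \<and> h ! (x + 2) = y"
  show "rect_cells x y 3 1 \<subseteq> skyline h n"
  proof
    fix c assume "c \<in> rect_cells x y 3 1"
    then obtain u where c: "c = (u, y)" "x \<le> u" "u < x + 3"
      by (auto simp: rect_cells_def)
    then have "u = x \<or> u = x + 1 \<or> u = x + 2"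
      by arith
    with c row assms(1-3) show "c \<in> skyline h n"
      by (auto simp: skyline_def)
  qed
qed

lemma vertical_tile_subset_skyline:
  assumes "x < length h" "h ! x = y"
  shows "rect_cells x y 1 3 \<subseteq> skyline h n \<longleftrightarrow> y + 3 \<le> n"
proof
  assume "rect_cells x y 1 3 \<subseteq> skyline h n"
  then have "(x, y + 2) \<in> skyline h n"
    by (auto simp: rect_cells_def)
  then show "y + 3 \<le> n"
    by (simp add: skyline_def)
qed (use assms in \<open>auto simp: rect_cells_def skyline_def\<close>)

lemma skyline_diff_horizontal_tile:
  assumes "x + 2 < length h" "h ! x = y" "h ! (x + 1) = y" "h ! (x + 2) = y"
  shows "skyline h n - rect_cells x y 3 1 = skyline (h[x := y + 1, x + 1 := y + 1, x + 2 := y + 1]) n"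
proof -
  have "(u, v) \<in> skyline h n - rect_cells x y 3 1 \<longleftrightarrow>
        (u, v) \<in> skyline (h[x := y + 1, x + 1 := y + 1, x + 2 := y + 1]) n" for u v
    using assms
    by (cases "u = x \<or> u = x + 1 \<or> u = x + 2")
       (auto simp: rect_cells_def skyline_def nth_list_update)
  then show ?thesis
    by auto
qed

lemma skyline_diff_vertical_tile:
  assumes "x < length h" "h ! x = y"
  shows "skyline h n - rect_cells x y 1 3 = skyline (h[x := y + 3]) n"
proof -
  have "(u, v) \<in> skyline h n - rect_cells x y 1 3 \<longleftrightarrow> (u, v) \<in> skyline (h[x := y + 3]) n" for u v
    using assms by (cases "u = x") (auto simp: rect_cells_def skyline_def nth_list_update)
  then show ?thesis
    by auto
qed

lemma card_skyline_diff_less: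
  assumes "t \<subseteq> skyline h n" "t \<noteq> {}"
  shows "card (skyline h n - t) < card (skyline h n)"
  using assms by (intro psubset_card_mono finite_skyline) blast

section \<open>Counting tilings of skylines by 1 \<times> 3 tiles\<close>

text \<open>The lowest, leftmost free cell is covered either by a horizontal tile, raising three
  adjacent columns by one, or by a vertical tile, raising its column by three.\<close>

function count_skyline :: "nat list \<Rightarrow> nat \<Rightarrow> nat" where
  "count_skyline h n =
     (if h = [] \<or> n \<le> min_list h then 1 else
      let y = min_list h; x = lowest_column h in
        (if x + 2 < length h \<and> h ! (x + 1) = y \<and> h ! (x + 2) = y
         then count_skyline (h[x := y + 1, x + 1 := y + 1, x + 2 := y + 1]) n else 0)
      + (if y + 3 \<le> n then count_skyline (h[x := y + 3]) n else 0))"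
  by pat_completeness auto
termination
proof (relation "measure (\<lambda>(h, n). card (skyline h n))", goal_cases)
  case (2 h n y x)
  then have row: "x + 2 < length h" "h ! x = y" "h ! (x + 1) = y" "h ! (x + 2) = y"
    using lowest_column by auto
  have "rect_cells x y 3 1 \<subseteq> skyline h n"
    using 2 row by (subst horizontal_tile_subset_skyline) (auto simp: min_list_le)
  then have "card (skyline h n - rect_cells x y 3 1) < card (skyline h n)"
    by (rule card_skyline_diff_less) (simp add: rect_cells_def)
  then show ?case
    by (simp only: skyline_diff_horizontal_tile[OF row]) simp
next
  case (3 h n y x)
  then have column: "x < length h" "h ! x = y"
    using lowest_column by auto
  have "rect_cells x y 1 3 \<subseteq> skyline h n"
    using vertical_tile_subset_skyline[OF column] 3 by blast
  then have "card (skyline h n - rect_cells x y 1 3) < card (skyline h n)"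
    by (rule card_skyline_diff_less) (simp add: rect_cells_def)
  then show ?case
    by (simp only: skyline_diff_vertical_tile[OF column]) simp
qed simp

declare count_skyline.simps [simp del]

theorem count_skyline_eq_card_tilings: "count_skyline h n = card (tilings 1 3 (skyline h n))"
proof (induction h n rule: count_skyline.induct)
  case (1 h n)
  show ?case
  proof (cases "h = [] \<or> n \<le> min_list h")
    case True
    then show ?thesis
      by (subst count_skyline.simps) (simp add: skyline_eq_empty_iff[THEN iffD2] tilings_empty)
  next
    case False
    define y x where "y = min_list h" and "x = lowest_column h"
    let ?row = "x + 2 < length h \<and> h ! (x + 1) = y \<and> h ! (x + 2) = y"
    let ?H = "h[x := y + 1, x + 1 := y + 1, x + 2 := y + 1]" and ?V = "h[x := y + 3]"
    have ne: "h \<noteq> []" and "y < n"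
      using False y_def by auto
    have column: "x < length h" "h ! x = y"
      using lowest_column[OF ne] x_def y_def by auto
    have lowest: "(x, y) \<in> skyline h n"
      "\<And>x' y'. (x', y') \<in> skyline h n \<Longrightarrow> y < y' \<or> (y = y' \<and> x \<le> x')"
      using lowest_cell_skyline[OF ne] \<open>y < n\<close> x_def y_def by auto
    have horizontal: "rect_cells x y 3 1 \<subseteq> skyline h n \<longleftrightarrow> ?row"
      using column \<open>y < n\<close> by (intro horizontal_tile_subset_skyline) (auto simp: y_def min_list_le)
    have "count_skyline h n = (if ?row then count_skyline ?H n else 0)
        + (if y + 3 \<le> n then count_skyline ?V n else 0)"
      using False by (subst count_skyline.simps) (simp add: Let_def x_def y_def)
    also have "\<dots> = (if ?row then card (tilings 1 3 (skyline ?H n)) else 0)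
        + (if y + 3 \<le> n then card (tilings 1 3 (skyline ?V n)) else 0)"
      using "1.IH"[OF False y_def x_def] by simp
    also have "\<dots> = card (tilings 1 3 (skyline h n))"
      using card_tilings_lowest_cell[OF lowest finite_skyline, of 1 3] horizontal
        vertical_tile_subset_skyline[OF column] skyline_diff_vertical_tile[OF column]
        skyline_diff_horizontal_tile[of x h y n] column by auto
    finally show ?thesis .
  qed
qed

lemma min_list_map_Suc: "h \<noteq> [] \<Longrightarrow> min_list (map Suc h) = Suc (min_list h)"
  by (simp add: min_list_Min mono_Min_commute mono_Suc)

lemma lowest_column_map_Suc: "h \<noteq> [] \<Longrightarrow> lowest_column (map Suc h) = lowest_column h"
  by (simp add: lowest_column_def min_list_map_Suc takeWhile_map comp_def)

lemma count_skyline_map_Suc: "count_skyline (map Suc h) (Suc n) = count_skyline h n"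
proof (induction h n rule: count_skyline.induct)
  case (1 h n)
  show ?case
  proof (cases "h = [] \<or> n \<le> min_list h")
    case True
    then show ?thesis
      by (subst (1 2) count_skyline.simps) (auto simp: min_list_map_Suc)
  next
    case False
    define y x where "y = min_list h" and "x = lowest_column h"
    have shifted: "min_list (map Suc h) = Suc y" "lowest_column (map Suc h) = x"
      using False by (simp_all add: y_def x_def min_list_map_Suc lowest_column_map_Suc)
    let ?row = "x + 2 < length h \<and> h ! (x + 1) = y \<and> h ! (x + 2) = y"
    let ?H = "h[x := y + 1, x + 1 := y + 1, x + 2 := y + 1]" and ?V = "h[x := y + 3]"
    have "count_skyline (map Suc h) (Suc n) =
        (if ?row then count_skyline (map Suc ?H) (Suc n) else 0)
      + (if y + 3 \<le> n then count_skyline (map Suc ?V) (Suc n) else 0)"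
      using False y_def by (subst count_skyline.simps) (simp add: Let_def shifted map_update cong: conj_cong)
    also have "\<dots> = (if ?row then count_skyline ?H n else 0)
      + (if y + 3 \<le> n then count_skyline ?V n else 0)"
      using "1.IH"[OF False y_def x_def] by simp
    also have "\<dots> = count_skyline h n"
      using False by (subst (2) count_skyline.simps) (simp add: Let_def x_def y_def)
    finally show ?thesis .
  qed
qed

lemma rectangle_eq_skyline: "rectangle m n = skyline (replicate m 0) n"
  by (auto simp: rectangle_def skyline_def)

lemma T_count_eq_card_tilings:
  assumes "0 < a" "0 < b"
  shows "T_count a b m N =
    (if even N \<and> a * b * N = m * (N div 2) then card (tilings a b (rectangle m (N div 2))) else 0)"
proof -
  have "card P = N \<longleftrightarrow> a * b * N = m * (N div 2)" if "P \<in> tilings a b (rectangle m (N div 2))" for P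
    using card_tiling[OF that] assms by (auto simp: rectangle_def card_cartesian_product)
  then have "{P. is_tiling a b m (N div 2) P \<and> card P = N} =
      (if a * b * N = m * (N div 2) then tilings a b (rectangle m (N div 2)) else {})"
    by (auto simp: is_tiling_iff_tilings)
  then show ?thesis
    by (simp add: T_count_def)
qed

lemma T_count_1_3_6:
  "T_count 1 3 6 N = (if even N then count_skyline (replicate 6 0) (N div 2) else 0)"
  by (auto simp: T_count_eq_card_tilings count_skyline_eq_card_tilings rectangle_eq_skyline)

section \<open>Transfer matrices and linear recurrences\<close>

definition row_mult :: "(nat \<Rightarrow> nat \<Rightarrow> 'a::semiring_0) \<Rightarrow> nat \<Rightarrow> 'a list \<Rightarrow> 'a list" where
  "row_mult T s r = map (\<lambda>l. \<Sum>j<s. r ! j * T j l) [0..<s]"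

primrec row_orbit :: "(nat \<Rightarrow> nat \<Rightarrow> 'a::semiring_0) \<Rightarrow> nat \<Rightarrow> 'a list \<Rightarrow> nat \<Rightarrow> 'a list list" where
  "row_orbit T s r 0 = [r]"
| "row_orbit T s r (Suc d) = r # row_orbit T s (row_mult T s r) d"

definition annihilates :: "(nat \<Rightarrow> 'a::semiring_0) \<Rightarrow> nat \<Rightarrow> 'a list list \<Rightarrow> bool" where
  "annihilates c s rows \<longleftrightarrow> (\<forall>l<s. (\<Sum>e<length rows. c e * rows ! e ! l) = 0)"

definition unit_row :: "nat \<Rightarrow> nat \<Rightarrow> 'a::zero_neq_one list" where
  "unit_row s i = map (\<lambda>l. if l = i then 1 else 0) [0..<s]"

lemma length_row_orbit: "length (row_orbit T s r d) = Suc d"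
  by (induction d arbitrary: r) auto

lemma nth_row_orbit: "m \<le> d \<Longrightarrow> row_orbit T s r d ! m = (row_mult T s ^^ m) r"
proof (induction d arbitrary: r m)
  case (Suc d)
  then show ?case
    by (cases m) (simp_all add: funpow_Suc_right del: funpow.simps)
qed simp

lemma sum_unit_row:
  fixes f :: "nat \<Rightarrow> 'a::semiring_1"
  assumes "i < s"
  shows "(\<Sum>l<s. unit_row s i ! l * f l) = f i"
proof -
  have "(\<Sum>l<s. unit_row s i ! l * f l) = (\<Sum>l<s. if l = i then f l else 0)"
    by (intro sum.cong) (auto simp: unit_row_def)
  then show ?thesis
    using assms by simp
qed

lemma sum_row_mult:
  fixes T :: "nat \<Rightarrow> nat \<Rightarrow> 'a::comm_semiring_1"
  assumes transfer: "\<And>i k. i < s \<Longrightarrow> v i (Suc k) = (\<Sum>j<s. T i j * v j k)"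
  shows "(\<Sum>l<s. row_mult T s r ! l * v l k) = (\<Sum>j<s. r ! j * v j (Suc k))"
proof -
  have "(\<Sum>l<s. row_mult T s r ! l * v l k) = (\<Sum>l<s. \<Sum>j<s. r ! j * T j l * v l k)"
    by (simp add: row_mult_def sum_distrib_right)
  also have "\<dots> = (\<Sum>j<s. \<Sum>l<s. r ! j * T j l * v l k)"
    by (rule sum.swap)
  also have "\<dots> = (\<Sum>j<s. r ! j * v j (Suc k))"
    by (intro sum.cong refl) (simp add: transfer sum_distrib_left mult.assoc)
  finally show ?thesis .
qed

lemma sum_row_mult_power:
  fixes T :: "nat \<Rightarrow> nat \<Rightarrow> 'a::comm_semiring_1"
  assumes transfer: "\<And>i k. i < s \<Longrightarrow> v i (Suc k) = (\<Sum>j<s. T i j * v j k)"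
  shows "(\<Sum>l<s. (row_mult T s ^^ m) r ! l * v l k) = (\<Sum>l<s. r ! l * v l (m + k))"
proof (induction m arbitrary: r k)
  case (Suc m)
  then show ?case
    by (simp add: funpow_Suc_right sum_row_mult[where v = v, OF transfer] del: funpow.simps)
qed simp

lemma transfer_recurrence:
  fixes T :: "nat \<Rightarrow> nat \<Rightarrow> 'a::comm_semiring_1"
  assumes transfer: "\<And>i k. i < s \<Longrightarrow> v i (Suc k) = (\<Sum>j<s. T i j * v j k)"
    and "annihilates c s (row_orbit T s r d)"
  shows "(\<Sum>e\<le>d. c e * (\<Sum>l<s. r ! l * v l (e + k))) = 0"
proof -
  have "(\<Sum>l<s. r ! l * v l (e + k)) = (\<Sum>l<s. row_orbit T s r d ! e ! l * v l k)" if "e \<le> d" for e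
    using that by (simp add: nth_row_orbit sum_row_mult_power[where v = v, OF transfer])
  then have "(\<Sum>e\<le>d. c e * (\<Sum>l<s. r ! l * v l (e + k))) =
      (\<Sum>e\<le>d. \<Sum>l<s. c e * row_orbit T s r d ! e ! l * v l k)"
    by (simp add: sum_distrib_left mult.assoc)
  also have "\<dots> = (\<Sum>l<s. \<Sum>e\<le>d. c e * row_orbit T s r d ! e ! l * v l k)"
    by (rule sum.swap)
  also have "\<dots> = (\<Sum>l<s. (\<Sum>e\<le>d. c e * row_orbit T s r d ! e ! l) * v l k)"
    by (simp add: sum_distrib_right)
  also have "\<dots> = 0"
    using assms(2) by (simp add: annihilates_def length_row_orbit lessThan_Suc_atMost)
  finally show ?thesis .
qed

section \<open>Rational generating functions\<close>

lemma fps_eq_divide_of_recurrence: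
  fixes p q :: "'a::field poly" and b :: "nat \<Rightarrow> 'a"
  assumes "coeff q 0 \<noteq> 0" "degree q \<le> m" "degree p < m"
    and recurrence: "\<And>n. m \<le> n \<Longrightarrow> (\<Sum>i\<le>degree q. coeff q i * b (n - i)) = 0"
    and initial: "\<And>n. n < m \<Longrightarrow> (\<Sum>i\<le>n. coeff q i * b (n - i)) = coeff p n"
  shows "Abs_fps b = fps_of_poly p / fps_of_poly q"
proof -
  have "(fps_of_poly q * Abs_fps b) $ n = fps_of_poly p $ n" for n
  proof (cases "n < m")
    case True
    then show ?thesis
      by (simp add: fps_mult_nth atLeast0AtMost initial)
  next
    case False
    have "(\<Sum>i\<le>n. coeff q i * b (n - i)) = (\<Sum>i\<le>degree q. coeff q i * b (n - i))"
      using False assms(2) by (intro sum.mono_neutral_right) (auto simp: coeff_eq_0)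
    with False assms(3) recurrence show ?thesis
      by (simp add: fps_mult_nth atLeast0AtMost coeff_eq_0)
  qed
  then have "fps_of_poly p = Abs_fps b * fps_of_poly q"
    by (simp add: fps_ext mult.commute)
  moreover have "fps_of_poly q \<noteq> 0"
    using assms(1) fps_of_poly_eq_iff[of q 0] by auto
  ultimately show ?thesis
    by simp
qed

lemma fps_compose_X_squared:
  "Abs_fps b oo fps_X ^ 2 = Abs_fps (\<lambda>n. if even n then b (n div 2) else (0 :: 'a::comm_ring_1))"
proof (rule fps_ext)
  fix n
  have "(Abs_fps b oo fps_X ^ 2) $ n = (\<Sum>i=0..n. if i = n div 2 \<and> even n then b i else 0)"
    unfolding fps_compose_nth
  proof (intro sum.cong refl)
    fix i
    have "n = 2 * i \<longleftrightarrow> i = n div 2 \<and> even n"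
      by auto
    then show "Abs_fps b $ i * ((fps_X ^ 2) ^ i) $ n = (if i = n div 2 \<and> even n then b i else 0)"
      by (simp add: power_mult[symmetric])
  qed
  also have "\<dots> = (if even n then b (n div 2) else 0)"
    by (simp add: sum.delta')
  finally show "(Abs_fps b oo fps_X ^ 2) $ n = Abs_fps (\<lambda>n. if even n then b (n div 2) else 0) $ n"
    by simp
qed

lemma fps_compose_rational:
  fixes p q r :: "'a::field poly"
  assumes "coeff q 0 \<noteq> 0" "coeff r 0 = 0"
  shows "(fps_of_poly p / fps_of_poly q) oo fps_of_poly r =
           fps_of_poly (pcompose p r) / fps_of_poly (pcompose q r)"
proof -
  have "is_unit (fps_of_poly q)"
    using assms(1) by simp
  then have "fps_of_poly q dvd fps_of_poly p"
    by (rule unit_imp_dvd)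
  moreover have "(fps_of_poly q oo fps_of_poly r) $ 0 \<noteq> 0"
    using assms(1) by simp
  then have "fps_of_poly q oo fps_of_poly r \<noteq> 0"
    by (metis fps_zero_nth)
  ultimately have "(fps_of_poly p / fps_of_poly q) oo fps_of_poly r =
      (fps_of_poly p oo fps_of_poly r) / (fps_of_poly q oo fps_of_poly r)"
    using assms(2) by (intro fps_compose_divide_distrib) simp_all
  also have "\<dots> = fps_of_poly (pcompose p r) / fps_of_poly (pcompose q r)"
    using assms(2) by (simp add: fps_of_poly_pcompose)
  finally show ?thesis .
qed

lemma pcompose_numeral: "pcompose (numeral n) p = (numeral n :: 'a::comm_semiring_1 poly)"
  by (metis pcompose_const numeral_poly)

lemma pcompose_monom:
  fixes c :: "'a::comm_semiring_1"
  shows "pcompose (monom c k) (monom 1 m) = monom c (m * k)"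
  by (induction k) (simp_all add: monom_0 monom_Suc pcompose_pCons mult_monom)

section \<open>The 6 \<times> n rectangle\<close>

lemma count_skyline_bottom_row:
  assumes "h \<noteq> []" "min_list h = 0" "3 \<le> n"
  shows "count_skyline h n =
    (let x = lowest_column h in
       (if x + 2 < length h \<and> h ! (x + 1) = 0 \<and> h ! (x + 2) = 0
        then count_skyline (h[x := 1, x + 1 := 1, x + 2 := 1]) n else 0)
     + count_skyline (h[x := 3]) n)"
  using assms by (subst count_skyline.simps) (simp add: Let_def)

lemma count_skyline_lower:
  assumes "0 \<notin> set h"
  shows "count_skyline h (Suc n) = count_skyline (map (\<lambda>c. c - 1) h) n"
proof -
  have "map Suc (map (\<lambda>c. c - 1) h) = h"
    using assms by (induction h) auto
  then show ?thesis
    by (metis count_skyline_map_Suc)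
qed

text \<open>The profiles (column heights above the lowest full row) reachable from the flat one.
  Filling the bottom row of profile i and lowering by one leads to the profiles listed in
  successors ! i, with multiplicity.\<close>

definition profiles :: "nat list list" where
  "profiles =
    [[0,0,0,0,0,0], [0,0,0,1,1,1], [0,0,0,2,2,2], [0,0,1,1,1,0], [0,0,2,2,2,0], [0,1,1,1,0,0],
     [0,2,2,2,0,0], [1,0,0,0,1,1], [1,1,0,0,0,1], [1,1,1,0,0,0], [1,1,1,1,1,1], [1,1,1,2,2,2],
     [1,1,2,2,2,1], [1,2,2,2,1,1], [2,0,0,0,2,2], [2,1,1,1,2,2], [2,2,0,0,0,2], [2,2,1,1,1,2],
     [2,2,2,0,0,0], [2,2,2,1,1,1], [2,2,2,2,2,2]]"

definition successors :: "nat list list" where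
  "successors =
    [[0,2,14,16,18,20], [0,18], [1,19], [16], [17], [14], [15], [0,6], [0,4], [0,2], [0], [1],
     [3], [5], [7,13], [7], [8,12], [8], [9,11], [9], [10]]"

lemma profile_transfer:
  assumes "2 \<le> n"
  shows "\<forall>(h, js) \<in> set (zip profiles successors).
           count_skyline h (Suc n) = (\<Sum>j\<leftarrow>js. count_skyline (profiles ! j) n)"
  using assms
  by (simp add: profiles_def successors_def count_skyline_bottom_row count_skyline_lower lowest_column_def)

definition transfer_matrix :: "nat \<Rightarrow> nat \<Rightarrow> int" where
  "transfer_matrix i j = int (count_list (successors ! i) j)"

text \<open>The shift by two: the transfer equations need height at least three, so that a vertical
  tile always fits into the strip.\<close>

definition column_counts :: "nat \<Rightarrow> nat \<Rightarrow> int" where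
  "column_counts l k = int (count_skyline (profiles ! l) (k + 2))"

lemma length_profiles: "length profiles = 21"
  by (simp add: profiles_def)

lemma length_successors: "length successors = 21"
  by (simp add: successors_def)

lemma successors_less: "\<forall>js \<in> set successors. set js \<subseteq> {..<21}"
  by (simp add: successors_def)

lemma column_counts_transfer:
  assumes "i < 21"
  shows "column_counts i (Suc k) = (\<Sum>j<21. transfer_matrix i j * column_counts j k)"
proof -
  have "(profiles ! i, successors ! i) \<in> set (zip profiles successors)"
    using assms by (auto simp: set_zip length_profiles length_successors)
  then have "count_skyline (profiles ! i) (Suc k + 2) =
      (\<Sum>j\<leftarrow>successors ! i. count_skyline (profiles ! j) (k + 2))"
    using profile_transfer[of "k + 2"] by auto
  also have "\<dots> = (\<Sum>j<21. count_list (successors ! i) j * count_skyline (profiles ! j) (k + 2))"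
  proof (rule sum_list_map_eq_sum_count2)
    show "set (successors ! i) \<subseteq> {..<21}"
      using assms successors_less by (simp add: length_successors)
  qed simp
  finally show ?thesis
    by (simp add: column_counts_def transfer_matrix_def)
qed

text \<open>Numerator and denominator as polynomials in w = z^2.\<close>

definition gf_numerator :: "rat poly" where
  "gf_numerator = (1 - monom 1 3) ^ 2 * (1 - monom 1 2 - monom 1 3)"

definition gf_denominator :: "rat poly" where
  "gf_denominator = 1 - monom 1 1 - monom 1 2 - 7 * monom 1 3 + monom 1 4 + 5 * monom 1 5
     + 10 * monom 1 6 + monom 1 7 - 3 * monom 1 8 - 5 * monom 1 9 - monom 1 10 + monom 1 11
     + monom 1 12"

definition denominator_coeffs :: "int list" where
  "denominator_coeffs = [1, -1, -1, -7, 1, 5, 10, 1, -3, -5, -1, 1, 1]"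

lemma coeffs_gf_numerator: "coeffs gf_numerator = [1, 0, -1, -3, 0, 2, 3, 0, -1, -1]"
  by code_simp

lemma coeffs_gf_denominator: "coeffs gf_denominator = map of_int denominator_coeffs"
  by code_simp

lemma denominator_annihilates_row_orbit:
  "annihilates (\<lambda>e. denominator_coeffs ! (12 - e)) 21 (row_orbit transfer_matrix 21 (unit_row 21 0) 12)"
  by code_simp

definition width_6_initial :: "int list" where
  "width_6_initial = [1, 1, 1, 6, 13, 22, 64, 155, 321, 783, 1888, 4233, 9912, 23494]"

lemma row_orbit_initial_counts:
  "map (\<lambda>r. \<Sum>l<21. r ! l * column_counts l 0) (row_orbit transfer_matrix 21 (unit_row 21 0) 11) =
     drop 2 width_6_initial"
  by code_simp

lemma profiles_0: "profiles ! 0 = replicate 6 0"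
  by (simp add: profiles_def numeral_eq_Suc)

lemma width_6_recurrence:
  "(\<Sum>i\<le>12. denominator_coeffs ! i * int (count_skyline (replicate 6 0) (k + 14 - i))) = 0"
proof -
  have "(\<Sum>e\<le>12. denominator_coeffs ! (12 - e) *
      (\<Sum>l<21. unit_row 21 0 ! l * column_counts l (e + k))) = 0"
    by (rule transfer_recurrence[where v = column_counts, OF column_counts_transfer denominator_annihilates_row_orbit])
  then have "(\<Sum>e=0..12. denominator_coeffs ! (12 - e) * column_counts 0 (e + k)) = 0"
    by (simp add: sum_unit_row atLeast0AtMost)
  then have "(\<Sum>i=0..12. denominator_coeffs ! i * column_counts 0 (12 - i + k)) = 0"
    by (subst (asm) sum.atLeastAtMost_rev) simp
  moreover have "(\<Sum>i=0..12. denominator_coeffs ! i * column_counts 0 (12 - i + k)) =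
      (\<Sum>i\<le>12. denominator_coeffs ! i * int (count_skyline (replicate 6 0) (k + 14 - i)))"
    unfolding atLeast0AtMost
  proof (rule sum.cong)
    fix i assume "i \<in> {..12::nat}"
    then have index: "12 - i + k + 2 = k + 14 - i"
      by simp
    show "denominator_coeffs ! i * column_counts 0 (12 - i + k) =
        denominator_coeffs ! i * int (count_skyline (replicate 6 0) (k + 14 - i))"
      by (simp only: column_counts_def profiles_0 index)
  qed simp
  ultimately show ?thesis
    by simp
qed

lemma width_6_initial_counts:
  assumes "n < 14"
  shows "int (count_skyline (replicate 6 0) n) = width_6_initial ! n"
proof (cases "n < 2")
  case True
  have "int (count_skyline (replicate 6 0) 0) = 1" "int (count_skyline (replicate 6 0) 1) = 1"
    by code_simp+
  moreover have "n = 0 \<or> n = 1"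
    using True by arith
  ultimately show ?thesis
    by (auto simp: width_6_initial_def)
next
  case False
  define m where "m = n - 2"
  then have m: "n = m + 2" "m \<le> 11"
    using False assms by simp_all
  have "int (count_skyline (replicate 6 0) n) = (\<Sum>l<21. unit_row 21 0 ! l * column_counts l m)"
    by (simp add: sum_unit_row column_counts_def profiles_0 m)
  also have "\<dots> = (\<Sum>l<21. row_orbit transfer_matrix 21 (unit_row 21 0) 11 ! m ! l * column_counts l 0)"
    using m by (simp add: nth_row_orbit sum_row_mult_power[where v = column_counts, OF column_counts_transfer])
  also have "\<dots> = drop 2 width_6_initial ! m"
    using m by (simp add: row_orbit_initial_counts[symmetric] length_row_orbit)
  finally show ?thesis
    using m by (simp add: width_6_initial_def)
qed

lemma length_denominator_coeffs: "length denominator_coeffs = 13"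
  by (simp add: denominator_coeffs_def)

lemma coeff_gf_numerator: "coeff gf_numerator i = nth_default 0 [1, 0, -1, -3, 0, 2, 3, 0, -1, -1] i"
  by (simp flip: nth_default_coeffs_eq add: coeffs_gf_numerator)

lemma coeff_gf_denominator: "coeff gf_denominator i = nth_default 0 (map of_int denominator_coeffs) i"
  by (simp flip: nth_default_coeffs_eq add: coeffs_gf_denominator)

lemma generating_function_width_6:
  "Abs_fps (\<lambda>n. of_nat (count_skyline (replicate 6 0) n)) =
     fps_of_poly gf_numerator / fps_of_poly gf_denominator"
proof (rule fps_eq_divide_of_recurrence)
  have degree: "degree gf_denominator = 12"
    by (simp add: degree_eq_length_coeffs coeffs_gf_denominator denominator_coeffs_def)
  show "coeff gf_denominator 0 \<noteq> 0"
    by (simp add: coeff_gf_denominator denominator_coeffs_def)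
  show "degree gf_denominator \<le> 14"
    by (simp add: degree)
  show "degree gf_numerator < 14"
    by (simp add: degree_eq_length_coeffs coeffs_gf_numerator)
  show "(\<Sum>i\<le>degree gf_denominator. coeff gf_denominator i * of_nat (count_skyline (replicate 6 0) (n - i))) = 0"
    if "14 \<le> n" for n
  proof -
    obtain k where n: "n = k + 14"
      using \<open>14 \<le> n\<close> by (metis add.commute le_iff_add)
    have "(\<Sum>i\<le>12. coeff gf_denominator i * of_nat (count_skyline (replicate 6 0) (n - i))) =
        of_int (\<Sum>i\<le>12. denominator_coeffs ! i * int (count_skyline (replicate 6 0) (k + 14 - i)))"
      unfolding n of_int_sum
      by (intro sum.cong refl) (simp add: coeff_gf_denominator nth_default_def length_denominator_coeffs)
    then show ?thesis
      by (simp add: degree width_6_recurrence)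
  qed
  have check: "\<forall>n<14. (\<Sum>i\<le>n. nth_default 0 (map of_int denominator_coeffs) i *
      of_int (width_6_initial ! (n - i))) = nth_default (0 :: rat) [1, 0, -1, -3, 0, 2, 3, 0, -1, -1] n"
    by code_simp
  show "(\<Sum>i\<le>n. coeff gf_denominator i * of_nat (count_skyline (replicate 6 0) (n - i))) =
      coeff gf_numerator n" if "n < 14" for n
  proof -
    have "of_nat (count_skyline (replicate 6 0) (n - i)) = (of_int (width_6_initial ! (n - i)) :: rat)"
      for i
      using width_6_initial_counts[of "n - i"] that by (metis of_int_of_nat_eq less_imp_diff_less)
    then show ?thesis
      using check that by (simp add: coeff_gf_numerator coeff_gf_denominator)
  qed
qed

lemma pcompose_gf_numerator:
  "pcompose gf_numerator (monom 1 2) = (1 - monom 1 6) ^ 2 * (1 - monom 1 4 - monom 1 6)"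
  by (simp add: gf_numerator_def pcompose_diff pcompose_mult pcompose_1 pcompose_monom power2_eq_square)

lemma pcompose_gf_denominator:
  "pcompose gf_denominator (monom 1 2) =
    1 - monom 1 2 - monom 1 4 - 7 * monom 1 6 + monom 1 8 + 5 * monom 1 10
       + 10 * monom 1 12 + monom 1 14 - 3 * monom 1 16 - 5 * monom 1 18 - monom 1 20
       + monom 1 22 + monom 1 24"
  by (simp add: gf_denominator_def pcompose_diff pcompose_add pcompose_mult pcompose_1
      pcompose_monom pcompose_numeral)

theorem mainTheorem3:
  shows "Abs_fps (\<lambda>N. of_nat (T_count 1 3 6 N) :: rat) =
    fps_of_poly ((1 - monom 1 6)^2 * (1 - monom 1 4 - monom 1 6)) /
    fps_of_poly (1 - monom 1 2 - monom 1 4 - 7 * monom 1 6 + monom 1 8 + 5 * monom 1 10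
       + 10 * monom 1 12 + monom 1 14 - 3 * monom 1 16 - 5 * monom 1 18 - monom 1 20
       + monom 1 22 + monom 1 24)"
proof -
  let ?B = "Abs_fps (\<lambda>n. of_nat (count_skyline (replicate 6 0) n) :: rat)"
  have "Abs_fps (\<lambda>N. of_nat (T_count 1 3 6 N) :: rat) =
      Abs_fps (\<lambda>N. if even N then of_nat (count_skyline (replicate 6 0) (N div 2)) else 0)"
    unfolding T_count_1_3_6 by (simp add: if_distrib cong: if_cong)
  also have "\<dots> = ?B oo fps_of_poly (monom 1 2)"
    by (simp add: fps_compose_X_squared fps_of_poly_monom')
  also have "\<dots> = (fps_of_poly gf_numerator / fps_of_poly gf_denominator) oo fps_of_poly (monom 1 2)"
    by (simp only: generating_function_width_6)
  also have "\<dots> = fps_of_poly (pcompose gf_numerator (monom 1 2)) /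
                  fps_of_poly (pcompose gf_denominator (monom 1 2))"
    by (rule fps_compose_rational) (simp_all add: coeff_gf_denominator denominator_coeffs_def)
  finally show ?thesis
    by (simp only: pcompose_gf_numerator pcompose_gf_denominator)
qed

end
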